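(* Let $\xi>0$, $\tau>0$, $A_n:=\xi\tau^n n!$ for $n\ge1$, and $R_\ell>0$ for $\ell\ge1$. Define $\Gamma^{[\ell]}_n$ and $\mathbb{B}^{[\ell]}_{n,\lambda}$ recursively by $\Gamma^{[1]}_n:=A_n$ ($n\ge1$); $\Gamma^{[\ell]}_n:=\sum_{\lambda=1}^nA_\lambda R_{\ell-1}^\lambda\mathbb{B}^{[\ell-1]}_{n,\lambda}$ ($\ell\ge2$, $n\ge1$); $\mathbb{B}^{[\ell]}_{n,1}:=\Gamma^{[\ell]}_n$ ($n\ge1$); $\mathbb{B}^{[\ell]}_{n,\lambda}:=\sum_{i=\lambda-1}^{n-1}\binom{n-1}{i}\Gamma^{[\ell]}_{n-i}\mathbb{B}^{[\ell]}_{i,\lambda-1}$ ($\ell\ge1$, $n\ge\lambda\ge2$). Let $P_0:=1$ and $P_k:=\prod_{t=1}^k(\xi\tau R_t)$ for $k\ge1$. Then $$\Gamma^{[\ell]}_n=\mathbb{B}^{[\ell]}_{n,1}=P_{\ell-1}\Big(\sum_{k=0}^{\ell-1}P_k\Big)^{n-1}\xi\,\tau^n\,n!\quad\text{for }\ell\ge1,\ n\ge1,$$ $$\mathbb{B}^{[\ell]}_{n,\lambda}=P_{\ell-1}^\lambda\Big(\sum_{k=0}^{\ell-1}P_k\Big)^{n-\lambda}\xi^\lambda\,\tau^n\,\frac{n!}{\lambda!}\binom{n-1}{\lambda-1}\quad\text{for }\ell\ge1,\ n\ge\lambda\ge1.$$ *)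

theory Defs
  imports Complex_Main
begin

definition Aseq :: "real \<Rightarrow> real \<Rightarrow> nat \<Rightarrow> real" where
  "Aseq xi tau n = xi * tau ^ n * fact n"

text \<open>Given the sequence g = Gamma^[l], the array B^[l]_{n,lambda}:
  B_{n,1} = g n;  B_{n,lambda} = sum_{i=lambda-1}^{n-1} (n-1 choose i) g(n-i) B_{i,lambda-1}
  for lambda >= 2.  The value at lambda = 0 is an unused convention.\<close>
fun Bop :: "(nat \<Rightarrow> real) \<Rightarrow> nat \<Rightarrow> nat \<Rightarrow> real" where
  "Bop g n 0 = 0"
| "Bop g n (Suc 0) = g n"
| "Bop g n (Suc (Suc k)) =
     (\<Sum>i = Suc k..n - 1. real ((n - 1) choose i) * g (n - i) * Bop g i (Suc k))"

text \<open>Gamma^[l]_n, indexed by l >= 1 (the value at l = 0 is an unused convention):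
  Gamma^[1]_n = A_n;  Gamma^[l]_n = sum_{lambda=1}^n A_lambda R_{l-1}^lambda B^[l-1]_{n,lambda}.\<close>
primrec Gam :: "real \<Rightarrow> real \<Rightarrow> (nat \<Rightarrow> real) \<Rightarrow> nat \<Rightarrow> nat \<Rightarrow> real" where
  "Gam xi tau R 0 = (\<lambda>n. 0)"
| "Gam xi tau R (Suc l) =
     (if l = 0 then Aseq xi tau
      else (\<lambda>n. \<Sum>lam = 1..n. Aseq xi tau lam * R l ^ lam * Bop (Gam xi tau R l) n lam))"

definition BB :: "real \<Rightarrow> real \<Rightarrow> (nat \<Rightarrow> real) \<Rightarrow> nat \<Rightarrow> nat \<Rightarrow> nat \<Rightarrow> real" where
  "BB xi tau R l n lam = Bop (Gam xi tau R l) n lam"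

definition Pprod :: "real \<Rightarrow> real \<Rightarrow> (nat \<Rightarrow> real) \<Rightarrow> nat \<Rightarrow> real" where
  "Pprod xi tau R k = (\<Prod>t = 1..k. xi * tau * R t)"

end

theory Submission
  imports Defs
begin

text \<open>
  Call a sequence geometric-factorial if \<open>g n = C * a ^ (n - 1) * tau ^ n * fact n\<close>.
  For such \<open>g\<close>, induction on \<open>lam\<close> gives
  \<open>Bop g n lam = C ^ lam * a ^ (n - lam) * tau ^ n * fact n / fact lam * ((n - 1) choose (lam - 1))\<close>:
  in the recursion the factorials collapse through
  \<open>((n - 1) choose i) * fact (n - i) * fact i = fact (n - 1) * (n - i)\<close>, and what remains is
  the binomial sum \<open>\<Sum>i. (n - i) * ((i - 1) choose (lam - 2)) = n choose lam\<close>.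
  Substituting this into the recursion for \<open>Gam\<close>, the binomial theorem shows that
  \<open>Gam (l + 1)\<close> is again geometric-factorial, with \<open>C = xi * P l\<close> and \<open>a = P 0 + \<dots> + P l\<close>;
  so induction on \<open>l\<close> yields both formulas. The identities are polynomial.
\<close>

lemma sum_choose_pred_upper: "(\<Sum>i = Suc k..N. (i - 1) choose k) = N choose Suc k"
  by (induction N) (auto simp: binomial_eq_0 not_less_eq)

lemma sum_diff_mult_choose_pred:
  "(\<Sum>i = Suc k..N. (Suc N - i) * ((i - 1) choose k)) = Suc N choose Suc (Suc k)"
proof (induction N)
  case 0
  then show ?case by simp
next
  case (Suc N)
  have "(\<Sum>i = Suc k..N. (Suc (Suc N) - i) * ((i - 1) choose k))
      = (\<Sum>i = Suc k..N. (Suc N - i) * ((i - 1) choose k) + ((i - 1) choose k))"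
    by (rule sum.cong) (auto simp: Suc_diff_le)
  also have "\<dots> = (Suc N choose Suc (Suc k)) + (N choose Suc k)"
    unfolding sum.distrib Suc.IH sum_choose_pred_upper ..
  finally show ?case
    by (cases "N < k") (auto simp: binomial_eq_0)
qed

lemma choose_mult_fact_diff:
  assumes "i < n"
  shows "real ((n - 1) choose i) * fact (n - i) * fact i = fact (n - 1) * real (n - i)"
proof -
  define d where "d = n - 1 - i"
  have n_i: "n - i = Suc d"
    using assms unfolding d_def by simp
  have "fact i * fact d * ((n - 1) choose i) = fact (n - 1)"
    using assms unfolding d_def by (intro binomial_fact_lemma) simp
  then have "fact i * fact d * real ((n - 1) choose i) = fact (n - 1)"
    by (metis of_nat_fact of_nat_mult)
  then show ?thesis
    unfolding n_i fact_Suc by (simp add: algebra_simps)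
qed

lemma choose_Suc_mult_fact:
  "real (Suc N choose Suc m) * (fact N / fact m) = fact (Suc N) / fact (Suc m) * real (N choose m)"
proof -
  have "real (Suc m) * real (Suc N choose Suc m) = real (Suc N) * real (N choose m)"
    using Suc_times_binomial[of m N] by (metis of_nat_mult)
  then show ?thesis
    by (simp del: of_nat_Suc binomial_Suc_Suc add: field_simps)
qed

lemma Bop_geometric_factorial:
  fixes C a tau :: real
  assumes g: "\<And>n. n \<ge> 1 \<Longrightarrow> g n = C * a ^ (n - 1) * tau ^ n * fact n"
  shows "Suc k \<le> n \<Longrightarrow> Bop g n (Suc k) =
    C ^ Suc k * a ^ (n - Suc k) * tau ^ n * (fact n / fact (Suc k)) * real ((n - 1) choose k)"
proof (induction k arbitrary: n)
  case 0
  then show ?case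
    by (simp add: g)
next
  case (Suc k)
  let ?c = "C ^ Suc (Suc k) * a ^ (n - Suc (Suc k)) * tau ^ n * (fact (n - 1) / fact (Suc k))"
  have summand: "real ((n - 1) choose i) * g (n - i) * Bop g i (Suc k)
      = ?c * real ((n - i) * ((i - 1) choose k))" if i: "i \<in> {Suc k..n - 1}" for i
  proof -
    have "n - Suc (Suc k) = (n - i - 1) + (i - Suc k)"
      using i by auto
    then have a_pow: "a ^ (n - i - 1) * a ^ (i - Suc k) = a ^ (n - Suc (Suc k))"
      by (simp only: power_add)
    have tau_pow: "tau ^ (n - i) * tau ^ i = tau ^ n"
      using i by (auto simp flip: power_add)
    have fact_id: "real ((n - 1) choose i) * fact (n - i) * fact i = fact (n - 1) * real (n - i)"
      using i by (intro choose_mult_fact_diff) auto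
    have "g (n - i) = C * a ^ (n - i - 1) * tau ^ (n - i) * fact (n - i)"
      using i by (intro g) auto
    moreover have "Bop g i (Suc k) =
        C ^ Suc k * a ^ (i - Suc k) * tau ^ i * (fact i / fact (Suc k)) * real ((i - 1) choose k)"
      using i by (intro Suc.IH) auto
    ultimately have "real ((n - 1) choose i) * g (n - i) * Bop g i (Suc k)
        = C ^ Suc (Suc k) * (a ^ (n - i - 1) * a ^ (i - Suc k)) * (tau ^ (n - i) * tau ^ i)
          * (real ((n - 1) choose i) * fact (n - i) * fact i) / fact (Suc k) * real ((i - 1) choose k)"
      by (simp only: power_Suc times_divide_eq_right times_divide_eq_left mult_ac)
    then show ?thesis
      unfolding a_pow tau_pow fact_id by (simp add: mult_ac)
  qed
  have n_eq: "Suc (n - 1) = n"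
    using Suc.prems by simp
  have "Bop g n (Suc (Suc k)) = (\<Sum>i = Suc k..n - 1. ?c * real ((n - i) * ((i - 1) choose k)))"
    using summand by simp
  also have "\<dots> = ?c * real (\<Sum>i = Suc k..n - 1. (n - i) * ((i - 1) choose k))"
    by (simp only: of_nat_sum sum_distrib_left)
  also have "(\<Sum>i = Suc k..n - 1. (n - i) * ((i - 1) choose k)) = n choose Suc (Suc k)"
    using sum_diff_mult_choose_pred[where k = k and N = "n - 1"] n_eq by simp
  also have "?c * real (n choose Suc (Suc k)) = C ^ Suc (Suc k) * a ^ (n - Suc (Suc k)) * tau ^ n
      * (real (Suc (n - 1) choose Suc (Suc k)) * (fact (n - 1) / fact (Suc k)))"
    unfolding n_eq by (simp only: mult_ac)
  also have "\<dots> = C ^ Suc (Suc k) * a ^ (n - Suc (Suc k)) * tau ^ n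
      * (fact n / fact (Suc (Suc k))) * real ((n - 1) choose Suc k)"
    by (subst choose_Suc_mult_fact) (simp only: n_eq mult_ac)
  finally show ?case .
qed

lemma sum_Aseq_Bop_geometric_factorial:
  fixes C a xi tau r :: real
  assumes g: "\<And>n. n \<ge> 1 \<Longrightarrow> g n = C * a ^ (n - 1) * tau ^ n * fact n"
    and n: "n = Suc m"
  shows "(\<Sum>lam = 1..n. Aseq xi tau lam * r ^ lam * Bop g n lam)
    = xi * (C * tau * r) * (C * tau * r + a) ^ m * tau ^ n * fact n"
proof -
  let ?q = "C * tau * r"
  have "(\<Sum>lam = 1..n. Aseq xi tau lam * r ^ lam * Bop g n lam)
      = (\<Sum>j = 0..m. Aseq xi tau (Suc j) * r ^ Suc j * Bop g n (Suc j))"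
    unfolding n One_nat_def sum.shift_bounds_cl_Suc_ivl ..
  also have "\<dots> = (\<Sum>j = 0..m. (xi * ?q * tau ^ n * fact n) * (real (m choose j) * ?q ^ j * a ^ (m - j)))"
  proof (rule sum.cong [OF refl])
    fix j
    assume j: "j \<in> {0..m}"
    have "Bop g n (Suc j) = C ^ Suc j * a ^ (m - j) * tau ^ n * (fact n / fact (Suc j)) * real (m choose j)"
      using Bop_geometric_factorial [OF g, of j n] j n by simp
    moreover have "fact (Suc j) \<noteq> (0::real)"
      by (rule fact_nonzero)
    ultimately show "Aseq xi tau (Suc j) * r ^ Suc j * Bop g n (Suc j)
        = (xi * ?q * tau ^ n * fact n) * (real (m choose j) * ?q ^ j * a ^ (m - j))"
      unfolding Aseq_def by (simp add: power_mult_distrib field_simps del: fact_Suc)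
  qed
  also have "\<dots> = (xi * ?q * tau ^ n * fact n) * (?q + a) ^ m"
    unfolding binomial_ring sum_distrib_left atLeast0AtMost ..
  finally show ?thesis
    by (simp only: mult_ac)
qed

lemma Pprod_Suc: "Pprod xi tau R (Suc l) = Pprod xi tau R l * (xi * tau * R (Suc l))"
  by (simp add: Pprod_def)

lemma Gam_closed_form:
  "n \<ge> 1 \<Longrightarrow> Gam xi tau R (Suc l) n
    = xi * Pprod xi tau R l * (\<Sum>k = 0..l. Pprod xi tau R k) ^ (n - 1) * tau ^ n * fact n"
proof (induction l arbitrary: n)
  case 0
  then show ?case
    by (simp add: Aseq_def Pprod_def)
next
  case (Suc l)
  from Suc.prems obtain m where n: "n = Suc m"
    by (cases n) auto
  have "Gam xi tau R (Suc (Suc l)) n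
      = (\<Sum>lam = 1..n. Aseq xi tau lam * R (Suc l) ^ lam * Bop (Gam xi tau R (Suc l)) n lam)"
    by simp
  also have "\<dots> = xi * Pprod xi tau R (Suc l)
      * (Pprod xi tau R (Suc l) + (\<Sum>k = 0..l. Pprod xi tau R k)) ^ m * tau ^ n * fact n"
    using sum_Aseq_Bop_geometric_factorial [OF Suc.IH n, where xi = xi and r = "R (Suc l)"]
    unfolding Pprod_Suc by (simp add: mult_ac del: Gam.simps)
  finally show ?case
    unfolding n by (simp add: add.commute del: Gam.simps)
qed

theorem lemma6p3:
  fixes xi tau :: real and R :: "nat \<Rightarrow> real"
  assumes "xi > 0" and "tau > 0" and "\<And>l. l \<ge> 1 \<Longrightarrow> R l > 0"
  shows "(\<forall>l n. l \<ge> 1 \<and> n \<ge> 1 \<longrightarrow>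
            Gam xi tau R l n = BB xi tau R l n 1 \<and>
            BB xi tau R l n 1 =
              Pprod xi tau R (l - 1) * (\<Sum>k = 0..l - 1. Pprod xi tau R k) ^ (n - 1)
              * xi * tau ^ n * fact n)
       \<and> (\<forall>l n lam. l \<ge> 1 \<and> 1 \<le> lam \<and> lam \<le> n \<longrightarrow>
            BB xi tau R l n lam =
              Pprod xi tau R (l - 1) ^ lam * (\<Sum>k = 0..l - 1. Pprod xi tau R k) ^ (n - lam)
              * xi ^ lam * tau ^ n * (fact n / fact lam) * real ((n - 1) choose (lam - 1)))"
proof (intro conjI allI impI)
  fix l n :: nat
  assume "l \<ge> 1 \<and> n \<ge> 1"
  then obtain l' where "l = Suc l'" "n \<ge> 1"
    by (cases l) auto
  then show "Gam xi tau R l n = BB xi tau R l n 1"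
    and "BB xi tau R l n 1 =
      Pprod xi tau R (l - 1) * (\<Sum>k = 0..l - 1. Pprod xi tau R k) ^ (n - 1) * xi * tau ^ n * fact n"
    using Gam_closed_form [of n xi tau R l'] unfolding BB_def by (simp_all add: mult_ac del: Gam.simps)
next
  fix l n lam :: nat
  assume "l \<ge> 1 \<and> 1 \<le> lam \<and> lam \<le> n"
  then obtain l' j where l: "l = Suc l'" and lam: "lam = Suc j" "Suc j \<le> n"
    by (cases l; cases lam) auto
  let ?P = "Pprod xi tau R l'" and ?S = "\<Sum>k = 0..l'. Pprod xi tau R k"
  have "Bop (Gam xi tau R (Suc l')) n (Suc j)
      = (xi * ?P) ^ Suc j * ?S ^ (n - Suc j) * tau ^ n * (fact n / fact (Suc j)) * real ((n - 1) choose j)"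
    using Bop_geometric_factorial [of "Gam xi tau R (Suc l')" "xi * ?P" ?S tau j n] Gam_closed_form lam
    by (simp add: mult_ac del: Gam.simps)
  then show "BB xi tau R l n lam =
      Pprod xi tau R (l - 1) ^ lam * (\<Sum>k = 0..l - 1. Pprod xi tau R k) ^ (n - lam)
      * xi ^ lam * tau ^ n * (fact n / fact lam) * real ((n - 1) choose (lam - 1))"
    unfolding BB_def l lam by (simp add: power_mult_distrib mult_ac del: Gam.simps)
qed

end
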